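(* Let $\theta_0\in\mathsf\Theta\subseteq\mathbb{R}^d$ and let $Y_{1:n}=(Y_1,\dots,Y_n)\sim P^Y_{\theta_0}$, the marginal distribution of the observations under parameter $\theta_0$. For each $i$, let $\ell^S_i(\theta;y_i)$ be a random (simulation-based) estimator of the log-likelihood contribution of the observation $y_i$, and let the simulated log-likelihood of the whole data be $\ell^S(\theta;y_{1:n})=\sum_{i=1}^n \ell^S_i(\theta;y_i)$. Let $\mu_i(\theta;y_i)=\mathbb{E}\,\ell^S_i(\theta;y_i)$, where the expectation is over the simulation randomness with $y_i$ fixed, so that $\mu(\theta;y_{1:n}):=\mathbb{E}\,\ell^S(\theta;y_{1:n})=\sum_{i=1}^n\mu_i(\theta;y_i)$. Let $\theta_*=\mathcal R(\theta_0)$ be the simulation-based proxy, i.e. the maximizer over $\theta$ of $U(\theta_0,\theta):=\mathbb{E}_{\theta_0}\,\mu(\theta;Y)$. Assume: (i) $\mu_i(\theta;y_i)$ is three times continuously differentiable in $\theta=(\theta_{(1)},\dots,\theta_{(d)})$ for every $y_i$, $i\in 1{:}n$; (ii) there is a positive definite $K_1(\theta_0)\in\mathbb{R}^{d\times d}$ such that $\frac{1}{\sqrt n}\sum_{i=1}^n\frac{\partial\mu_i}{\partial\theta}(\theta_*;Y_i)$ converges in distribution to $\mathcal N(0,K_1(\theta_0))$ as $n\to\infty$; (iii) there is a positive definite $K_2(\theta_0)\in\mathbb{R}^{d\times d}$ such that $\frac{1}{n}\sum_{i=1}^n\frac{\partial^2\mu_i}{\partial\theta^2}(\theta_*;Y_i)$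 converges in probability to $-K_2(\theta_0)$; (iv) there exist an open ball $B_0$ containing $\theta_*$ and a constant $C$ such that for every $i$, $\mathbb{E}\,\sup_{\theta\in B_0}\max_{k_1,k_2,k_3\in 1:d}\left\|\frac{\partial^3\mu_i}{\partial\theta_{(k_1)}\partial\theta_{(k_2)}\partial\theta_{(k_3)}}(\theta;Y_i)\right\|\le C$. Let $S_n:=\frac{1}{\sqrt n}\sum_{i=1}^n\frac{\partial\mu_i}{\partial\theta}(\theta_*;Y_i)$. Then $S_n$ converges in distribution to $\mathcal N(0,K_1(\theta_0))$, and for every bounded set $B\subset\mathbb{R}^d$ containing $0$, \[ \mu\!\left(\theta_*+\tfrac{t}{\sqrt n};Y_{1:n}\right)-\mu(\theta_*;Y_{1:n})-S_n^\top t+\tfrac12 t^\top K_2(\theta_0)t \] converges in probability to zero uniformly over $t\in B$ as $n\to\infty$.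
   Context: Setting: a latent process $X$ with law $P_\theta$ is implicitly defined by a simulator, and observations $y=y_{1:n}$ have measurement density $g(y\mid x;\theta)$; the marginal density of $Y$ is $p^Y_\theta(y)=\int g(y\mid x;\theta)\,dP_\theta(x)$ with law $P^Y_\theta$. A "simulated log-likelihood" is an estimate of $\log p^Y_\theta(y)$ obtained by simulating $X$. The simulation-based proxy $\mathcal R(\theta_0)=\arg\max_\theta U(\theta_0,\theta)$, $U(\theta_0,\theta)=\int\mu(\theta;y)p^Y_{\theta_0}(y)\,dy$, is assumed well defined. *)

theory Defs
  imports "HOL-Probability.Probability"
begin

definition partial_deriv :: "'d::finite \<Rightarrow> (real^'d \<Rightarrow> real) \<Rightarrow> real^'d \<Rightarrow> real" where
  "partial_deriv k f x = deriv (\<lambda>s. f (x + s *\<^sub>R axis k 1)) 0"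

definition has_partial :: "'d::finite \<Rightarrow> (real^'d \<Rightarrow> real) \<Rightarrow> bool" where
  "has_partial k f \<longleftrightarrow> (\<forall>x. (\<lambda>s. f (x + s *\<^sub>R axis k 1)) differentiable (at 0))"

definition C3 :: "(real^'d::finite \<Rightarrow> real) \<Rightarrow> bool" where
  "C3 f \<longleftrightarrow> continuous_on UNIV f
     \<and> (\<forall>k. has_partial k f \<and> continuous_on UNIV (partial_deriv k f))
     \<and> (\<forall>j k. has_partial j (partial_deriv k f)
              \<and> continuous_on UNIV (partial_deriv j (partial_deriv k f)))
     \<and> (\<forall>i j k. has_partial i (partial_deriv j (partial_deriv k f))
              \<and> continuous_on UNIV (partial_deriv i (partial_deriv j (partial_deriv k f))))"

definition gradient_vec :: "(real^'d::finite \<Rightarrow> real) \<Rightarrow> real^'d \<Rightarrow> real^'d" where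
  "gradient_vec f x = (\<chi> k. partial_deriv k f x)"

definition hessian_mat :: "(real^'d::finite \<Rightarrow> real) \<Rightarrow> real^'d \<Rightarrow> real^'d^'d" where
  "hessian_mat f x = (\<chi> j k. partial_deriv j (partial_deriv k f) x)"

definition third_partial :: "(real^'d::finite \<Rightarrow> real) \<Rightarrow> 'd \<Rightarrow> 'd \<Rightarrow> 'd \<Rightarrow> real^'d \<Rightarrow> real" where
  "third_partial f i j k x = partial_deriv i (partial_deriv j (partial_deriv k f)) x"

definition pos_def_mat :: "real^'d^'d \<Rightarrow> bool" where
  "pos_def_mat K \<longleftrightarrow> transpose K = K \<and> (\<forall>x. x \<noteq> 0 \<longrightarrow> x \<bullet> (K *v x) > 0)"

definition mvnormal_density :: "real^'d^'d \<Rightarrow> real^'d::finite \<Rightarrow> real" where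
  "mvnormal_density K x =
     exp (- (x \<bullet> (matrix_inv K *v x)) / 2) / sqrt ((2 * pi) ^ CARD('d) * det K)"

definition mvnormal :: "real^'d^'d \<Rightarrow> (real^'d::finite) measure" where
  "mvnormal K = density lborel (\<lambda>x. ennreal (mvnormal_density K x))"

definition conv_in_distr :: "'a measure \<Rightarrow> (nat \<Rightarrow> 'a \<Rightarrow> real^'d::finite) \<Rightarrow> (real^'d) measure \<Rightarrow> bool" where
  "conv_in_distr M X N \<longleftrightarrow>
     (\<forall>f :: real^'d \<Rightarrow> real. continuous_on UNIV f \<and> bounded (range f) \<longrightarrow>
        (\<lambda>n. \<integral>\<omega>. f (X n \<omega>) \<partial>M) \<longlonglongrightarrow> (\<integral>x. f x \<partial>N))"

definition outer_prob :: "'a measure \<Rightarrow> 'a set \<Rightarrow> real" where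
  "outer_prob M A = Inf {measure M B | B. B \<in> sets M \<and> A \<inter> space M \<subseteq> B}"

definition conv_in_prob :: "'a measure \<Rightarrow> (nat \<Rightarrow> 'a \<Rightarrow> 'b::metric_space) \<Rightarrow> 'b \<Rightarrow> bool" where
  "conv_in_prob M X c \<longleftrightarrow>
     (\<forall>\<epsilon>>0. (\<lambda>n. outer_prob M {\<omega> \<in> space M. dist (X n \<omega>) c > \<epsilon>}) \<longlonglongrightarrow> 0)"

definition unif_conv_in_prob_zero :: "'a measure \<Rightarrow> (nat \<Rightarrow> 't \<Rightarrow> 'a \<Rightarrow> real) \<Rightarrow> 't set \<Rightarrow> bool" where
  "unif_conv_in_prob_zero M R B \<longleftrightarrow>
     (\<forall>\<epsilon>>0. (\<lambda>n. outer_prob M {\<omega> \<in> space M. \<exists>t\<in>B. \<bar>R n t \<omega>\<bar> > \<epsilon>}) \<longlonglongrightarrow> 0)"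

end

theory Submission
  imports Defs "HOL-Real_Asymp.Real_Asymp"
begin

text \<open>
  Write h = t / sqrt n and expand each mu_i(., Y_i) to second order around theta_star. The first-
  and second-order terms add up to S_n^T t and (1/2) t^T H_n t, where H_n is the averaged Hessian,
  so the expression in question equals the sum of the n Taylor remainders plus
  (1/2) t^T (H_n + K_2) t. The latter is O(|t|^2 |H_n + K_2|) and hence small in probability
  by (iii). Each remainder is at most (d |h|)^3 / 6 times the supremum over B_0 of the third
  partial derivatives of mu_i, so by (iv) and Markov's inequality the sum of the remainders is,
  uniformly over bounded t, of order n * n^(-3/2) in probability. The convergence of S_n is
  assumption (ii).
\<close>

section \<open>Continuous partial derivatives on R^d\<close>

lemma has_partial_line_has_real_derivative:
  fixes g :: "real^'d::finite \<Rightarrow> real"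
  assumes "has_partial k g"
  shows "((\<lambda>s. g (y + s *\<^sub>R axis k 1)) has_real_derivative partial_deriv k g (y + s *\<^sub>R axis k 1)) (at s)"
proof -
  let ?G = "\<lambda>s. g (y + s *\<^sub>R axis k 1)"
  have shift: "(\<lambda>u. g ((y + s *\<^sub>R axis k 1) + u *\<^sub>R axis k 1)) = (\<lambda>u. ?G (u + s))"
    by (rule ext) (simp add: scaleR_add_left algebra_simps)
  have "(\<lambda>u. g ((y + s *\<^sub>R axis k 1) + u *\<^sub>R axis k 1)) differentiable (at 0)"
    using assms unfolding has_partial_def by blast
  then have "DERIV (\<lambda>u. ?G (u + s)) 0 :> partial_deriv k g (y + s *\<^sub>R axis k 1)"
    unfolding partial_deriv_def shift by (simp add: DERIV_deriv_iff_real_differentiable)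
  then show ?thesis
    using DERIV_shift[of ?G _ 0 s] by simp
qed

lemma MVT_origin:
  fixes G G' :: "real \<Rightarrow> real"
  assumes "\<And>s. DERIV G s :> G' s"
  shows "\<exists>t. \<bar>t\<bar> \<le> \<bar>b\<bar> \<and> G b - G 0 = b * G' t"
proof -
  consider "b = 0" | "0 < b" | "b < 0" by linarith
  then show ?thesis
  proof cases
    case 1
    then show ?thesis by auto
  next
    case 2
    with MVT2[OF 2] assms obtain z where "0 < z" "z < b" "G b - G 0 = (b - 0) * G' z" by blast
    then show ?thesis by (intro exI[of _ z]) auto
  next
    case 3
    with MVT2[OF 3] assms obtain z where "b < z" "z < 0" "G 0 - G b = (0 - b) * G' z" by blast
    then show ?thesis by (intro exI[of _ z]) (auto simp: algebra_simps)
  qed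
qed

lemma axis_partial_sum_nth:
  fixes h :: "real^'d::finite"
  shows "(\<Sum>j\<in>S. h$j *\<^sub>R axis j (1::real)) $ i = (if i \<in> S then h$i else 0)"
  by (simp add: axis_def if_distrib sum.delta cong: if_cong)

lemma norm_axis_partial_sum_add_le:
  fixes h :: "real^'d::finite"
  assumes "k \<notin> S" "\<bar>t\<bar> \<le> \<bar>h$k\<bar>"
  shows "norm ((\<Sum>j\<in>S. h$j *\<^sub>R axis j (1::real)) + t *\<^sub>R axis k 1) \<le> norm h"
proof (rule norm_le_componentwise_cart)
  fix i
  show "norm (((\<Sum>j\<in>S. h$j *\<^sub>R axis j (1::real)) + t *\<^sub>R axis k 1) $ i) \<le> norm (h $ i)"
    unfolding vector_add_component vector_scaleR_component axis_partial_sum_nth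
    using assms by (auto simp: axis_def)
qed

text \<open>Moving along the coordinates in S one at a time, each step is controlled by the mean value
  theorem and the continuity of the corresponding partial derivative at x.\<close>
lemma continuous_partials_linear_approx:
  fixes g :: "real^'d::finite \<Rightarrow> real"
  assumes hp: "\<And>k. has_partial k g" and cp: "\<And>k. continuous_on UNIV (partial_deriv k g)"
    and "finite S" and "e > 0"
  shows "\<exists>d>0. \<forall>h. norm h < d \<longrightarrow>
    \<bar>g (x + (\<Sum>j\<in>S. h$j *\<^sub>R axis j 1)) - g x - (\<Sum>k\<in>S. h$k * partial_deriv k g x)\<bar>
      \<le> real (card S) * e * norm h"
  using \<open>finite S\<close>
proof (induction S rule: finite_induct)
  case empty
  then show ?case by (auto intro!: exI[of _ 1])
next
  case (insert k S)
  let ?D = "\<lambda>k. partial_deriv k g"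
  from insert.IH obtain d1 where d1: "d1 > 0" and
    H1: "\<And>h. norm h < d1 \<Longrightarrow>
      \<bar>g (x + (\<Sum>j\<in>S. h$j *\<^sub>R axis j 1)) - g x - (\<Sum>k\<in>S. h$k * ?D k x)\<bar> \<le> real (card S) * e * norm h"
    by blast
  from cp[of k] \<open>e > 0\<close> obtain d2 where d2: "d2 > 0" and
    H2: "\<And>z. dist z x < d2 \<Longrightarrow> dist (?D k z) (?D k x) < e"
    unfolding continuous_on_iff by blast
  show ?case
  proof (intro exI[of _ "min d1 d2"] conjI allI impI)
    show "min d1 d2 > 0" using d1 d2 by simp
    fix h :: "real^'d" assume hn: "norm h < min d1 d2"
    define y where "y = x + (\<Sum>j\<in>S. h$j *\<^sub>R axis j 1)"
    have step: "x + (\<Sum>j\<in>insert k S. h$j *\<^sub>R axis j 1) = y + h$k *\<^sub>R axis k 1"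
      using insert.hyps by (simp add: y_def algebra_simps)
    obtain t where t: "\<bar>t\<bar> \<le> \<bar>h$k\<bar>"
      and mv: "g (y + h$k *\<^sub>R axis k 1) - g y = h$k * ?D k (y + t *\<^sub>R axis k 1)"
      using MVT_origin[of "\<lambda>s. g (y + s *\<^sub>R axis k 1)" "\<lambda>s. ?D k (y + s *\<^sub>R axis k 1)" "h$k"]
        has_partial_line_has_real_derivative[OF hp] by auto
    have "norm ((\<Sum>j\<in>S. h$j *\<^sub>R axis j (1::real)) + t *\<^sub>R axis k 1) \<le> norm h"
      by (rule norm_axis_partial_sum_add_le[OF insert.hyps(2) t])
    then have "dist (y + t *\<^sub>R axis k 1) x < d2"
      using hn by (simp add: dist_norm y_def algebra_simps)
    then have "\<bar>?D k (y + t *\<^sub>R axis k 1) - ?D k x\<bar> \<le> e"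
      using H2 by (simp add: dist_real_def less_imp_le)
    then have "\<bar>h$k * (?D k (y + t *\<^sub>R axis k 1) - ?D k x)\<bar> \<le> norm h * e"
      unfolding abs_mult by (intro mult_mono) (auto simp: component_le_norm_cart)
    moreover have "\<bar>g y - g x - (\<Sum>k\<in>S. h$k * ?D k x)\<bar> \<le> real (card S) * e * norm h"
      using H1 hn unfolding y_def by simp
    moreover have "g (x + (\<Sum>j\<in>insert k S. h$j *\<^sub>R axis j 1)) - g x - (\<Sum>k\<in>insert k S. h$k * ?D k x)
       = h$k * (?D k (y + t *\<^sub>R axis k 1) - ?D k x) + (g y - g x - (\<Sum>k\<in>S. h$k * ?D k x))"
      unfolding step using insert.hyps mv by (simp add: algebra_simps)
    ultimately show "\<bar>g (x + (\<Sum>j\<in>insert k S. h$j *\<^sub>R axis j 1)) - g x - (\<Sum>k\<in>insert k S. h$k * ?D k x)\<bar>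
       \<le> real (card (insert k S)) * e * norm h"
      using insert.hyps by (simp add: algebra_simps)
  qed
qed

lemma has_derivative_continuous_partials:
  fixes g :: "real^'d::finite \<Rightarrow> real"
  assumes hp: "\<And>k. has_partial k g" and cp: "\<And>k. continuous_on UNIV (partial_deriv k g)"
  shows "(g has_derivative (\<lambda>h. \<Sum>k\<in>UNIV. h$k * partial_deriv k g x)) (at x)"
  unfolding has_derivative_at_alt
proof (intro conjI allI impI)
  show "bounded_linear (\<lambda>h::real^'d. \<Sum>k\<in>UNIV. h$k * partial_deriv k g x)"
    by (auto intro!: bounded_linear_intros)
  fix e :: real assume "e > 0"
  have card_pos: "real CARD('d) > 0" by simp
  obtain d where "d > 0" and
    approx: "\<And>h. norm h < d \<Longrightarrow> \<bar>g (x + (\<Sum>j\<in>UNIV. h$j *\<^sub>R axis j 1)) - g x - (\<Sum>k\<in>UNIV. h$k * partial_deriv k g x)\<bar>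
      \<le> real CARD('d) * (e / real CARD('d)) * norm h"
    using continuous_partials_linear_approx[OF hp cp finite_class.finite_UNIV, of "e / real CARD('d)" x] \<open>e > 0\<close>
    by auto
  have "(\<Sum>j\<in>UNIV. h$j *\<^sub>R axis j 1) = h" for h :: "real^'d"
    using basis_expansion[of h] by (simp add: scalar_mult_eq_scaleR)
  with approx card_pos have approx': "\<And>h. norm h < d \<Longrightarrow>
      \<bar>g (x + h) - g x - (\<Sum>k\<in>UNIV. h$k * partial_deriv k g x)\<bar> \<le> e * norm h"
    by simp
  show "\<exists>d>0. \<forall>y. norm (y - x) < d \<longrightarrow>
      norm (g y - g x - (\<Sum>k\<in>UNIV. (y - x)$k * partial_deriv k g x)) \<le> e * norm (y - x)"
    using \<open>d > 0\<close> approx'[of "_ - x"] by (intro exI[of _ d]) auto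
qed

lemma has_real_derivative_along_line:
  fixes g :: "real^'d::finite \<Rightarrow> real"
  assumes "\<And>k. has_partial k g" and "\<And>k. continuous_on UNIV (partial_deriv k g)"
  shows "((\<lambda>s. g (x + s *\<^sub>R h)) has_real_derivative (\<Sum>k\<in>UNIV. h$k * partial_deriv k g (x + s *\<^sub>R h))) (at s)"
proof -
  have "((\<lambda>s. g (x + s *\<^sub>R h)) has_derivative
      (\<lambda>s'. \<Sum>k\<in>UNIV. (s' *\<^sub>R h)$k * partial_deriv k g (x + s *\<^sub>R h))) (at s)"
    by (rule has_derivative_compose[OF _ has_derivative_continuous_partials[OF assms]])
      (auto intro!: derivative_eq_intros)
  moreover have "(\<lambda>s'. \<Sum>k\<in>UNIV. (s' *\<^sub>R h)$k * partial_deriv k g (x + s *\<^sub>R h))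
      = (*) (\<Sum>k\<in>UNIV. h$k * partial_deriv k g (x + s *\<^sub>R h))"
    by (rule ext) (simp add: sum_distrib_left algebra_simps)
  ultimately show ?thesis by (simp add: has_field_derivative_def)
qed

section \<open>Linear and quadratic forms on R^d\<close>

lemma abs_sum_mult_nth_le:
  fixes h :: "real^'d::finite"
  assumes "\<And>i. \<bar>a i\<bar> \<le> B"
  shows "\<bar>\<Sum>i\<in>UNIV. h$i * a i\<bar> \<le> real CARD('d) * norm h * B"
proof -
  have "\<bar>\<Sum>i\<in>UNIV. h$i * a i\<bar> \<le> (\<Sum>i\<in>UNIV. \<bar>h$i\<bar> * \<bar>a i\<bar>)"
    unfolding abs_mult[symmetric] by (rule sum_abs)
  also have "\<dots> \<le> (\<Sum>i\<in>(UNIV::'d set). norm h * B)"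
    using assms by (intro sum_mono mult_mono) (auto simp: component_le_norm_cart)
  finally show ?thesis by simp
qed

lemma inner_matrix_vector_mult_eq_sum:
  fixes A :: "real^'n::finite^'n"
  shows "x \<bullet> (A *v x) = (\<Sum>k\<in>UNIV. x$k * (\<Sum>j\<in>UNIV. x$j * A$j$k))"
proof -
  have "x \<bullet> (A *v x) = (\<Sum>j\<in>UNIV. \<Sum>k\<in>UNIV. x$j * A$j$k * x$k)"
    by (simp add: inner_vec_def matrix_vector_mult_def sum_distrib_left mult.assoc)
  also have "\<dots> = (\<Sum>k\<in>UNIV. \<Sum>j\<in>UNIV. x$j * A$j$k * x$k)"
    by (rule sum.swap)
  finally show ?thesis
    by (simp add: sum_distrib_left algebra_simps)
qed

lemma sum_matrix_vector_mult:
  "(\<Sum>i\<in>I. A i) *v x = (\<Sum>i\<in>I. A i *v x)"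
  by (induction I rule: infinite_finite_induct) (simp_all add: matrix_vector_mult_add_rdistrib)

lemma scaleR_matrix_vector_mult:
  fixes A :: "real^'n::finite^'m"
  shows "(c *\<^sub>R A) *v x = c *\<^sub>R (A *v x)"
  by (simp add: matrix_vector_mult_def vec_eq_iff sum_distrib_left mult.assoc)

lemma norm_matrix_vector_mult_le:
  fixes A :: "real^'n::finite^'m::finite"
  shows "norm (A *v x) \<le> real CARD('m) * norm A * norm x"
proof -
  have "norm (A *v x) \<le> (\<Sum>i\<in>UNIV. \<bar>(A *v x) $ i\<bar>)"
    by (rule norm_le_l1_cart)
  also have "\<dots> \<le> (\<Sum>i\<in>(UNIV::'m set). norm A * norm x)"
  proof (rule sum_mono)
    fix i
    have "\<bar>(A *v x) $ i\<bar> \<le> norm (A $ i) * norm x"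
      by (simp add: matrix_vector_mul_component Cauchy_Schwarz_ineq2)
    also have "\<dots> \<le> norm A * norm x"
      by (intro mult_right_mono Finite_Cartesian_Product.norm_nth_le) simp
    finally show "\<bar>(A *v x) $ i\<bar> \<le> norm A * norm x" .
  qed
  finally show ?thesis by simp
qed

lemma abs_inner_matrix_vector_mult_le:
  fixes A :: "real^'n::finite^'n"
  shows "\<bar>x \<bullet> (A *v x)\<bar> \<le> real CARD('n) * norm A * (norm x)\<^sup>2"
proof -
  have "\<bar>x \<bullet> (A *v x)\<bar> \<le> norm x * norm (A *v x)"
    by (rule Cauchy_Schwarz_ineq2)
  also have "\<dots> \<le> norm x * (real CARD('n) * norm A * norm x)"
    by (intro mult_left_mono norm_matrix_vector_mult_le) simp
  finally show ?thesis
    by (simp add: power2_eq_square mult_ac)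
qed

section \<open>Second-order Taylor expansion\<close>

definition max_third_partial :: "(real^'d::finite \<Rightarrow> real) \<Rightarrow> real^'d \<Rightarrow> real" where
  "max_third_partial f \<theta> = (MAX k1\<in>UNIV. MAX k2\<in>UNIV. MAX k3\<in>UNIV. \<bar>third_partial f k1 k2 k3 \<theta>\<bar>)"

definition taylor2_remainder :: "(real^'d::finite \<Rightarrow> real) \<Rightarrow> real^'d \<Rightarrow> real^'d \<Rightarrow> real" where
  "taylor2_remainder f x h =
     f (x + h) - f x - gradient_vec f x \<bullet> h - (h \<bullet> (hessian_mat f x *v h)) / 2"

lemma C3_taylor2_remainder_eq:
  fixes f :: "real^'d::finite \<Rightarrow> real"
  assumes "C3 f"
  shows "\<exists>t\<in>{0<..<1}. taylor2_remainder f x h =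
    (\<Sum>k\<in>UNIV. h$k * (\<Sum>j\<in>UNIV. h$j * (\<Sum>i\<in>UNIV. h$i * third_partial f i j k (x + t *\<^sub>R h)))) / 6"
proof -
  define D1 where "D1 k = partial_deriv k f" for k
  define D2 where "D2 j k = partial_deriv j (D1 k)" for j k
  define D3 where "D3 i j k = partial_deriv i (D2 j k)" for i j k
  from assms have
    order1: "\<And>k. has_partial k f" "\<And>k. continuous_on UNIV (D1 k)" and
    order2: "\<And>j k. has_partial j (D1 k)" "\<And>j k. continuous_on UNIV (D2 j k)" and
    order3: "\<And>i j k. has_partial i (D2 j k)" "\<And>i j k. continuous_on UNIV (D3 i j k)"
    unfolding C3_def D1_def D2_def D3_def by auto
  define p0 where "p0 s = f (x + s *\<^sub>R h)" for s
  define p1 where "p1 s = (\<Sum>k\<in>UNIV. h$k * D1 k (x + s *\<^sub>R h))" for s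
  define p2 where "p2 s = (\<Sum>k\<in>UNIV. h$k * (\<Sum>j\<in>UNIV. h$j * D2 j k (x + s *\<^sub>R h)))" for s
  define p3 where
    "p3 s = (\<Sum>k\<in>UNIV. h$k * (\<Sum>j\<in>UNIV. h$j * (\<Sum>i\<in>UNIV. h$i * D3 i j k (x + s *\<^sub>R h))))" for s
  have "DERIV p0 s :> p1 s" for s
    unfolding p0_def p1_def D1_def using has_real_derivative_along_line[OF order1[unfolded D1_def]] .
  moreover have "DERIV p1 s :> p2 s" for s
    unfolding p1_def p2_def
    by (intro DERIV_sum DERIV_cmult has_real_derivative_along_line[of "D1 _", unfolded D2_def[symmetric]]
        order2[unfolded D2_def] order2)
  moreover have "DERIV p2 s :> p3 s" for s
    unfolding p2_def p3_def
    by (intro DERIV_sum DERIV_cmult has_real_derivative_along_line[of "D2 _ _", unfolded D3_def[symmetric]]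
        order3[unfolded D3_def] order3)
  ultimately have "\<forall>m t. m < 3 \<and> 0 \<le> t \<and> t \<le> 1 \<longrightarrow>
      DERIV ([p0, p1, p2, p3] ! m) t :> ([p0, p1, p2, p3] ! Suc m) t"
    by (auto simp: less_Suc_eq numeral_3_eq_3)
  from Maclaurin[of 1 3 "(!) [p0, p1, p2, p3]" p0, OF _ _ _ this] obtain t where
    "0 < t" "t < 1" "p0 1 = (\<Sum>m<3. ([p0, p1, p2, p3] ! m) 0 / fact m) + p3 t / fact 3"
    by auto
  then have "t \<in> {0<..<1}" "p0 1 = p0 0 + p1 0 + p2 0 / 2 + p3 t / 6"
    by (simp_all add: numeral_3_eq_3 lessThan_Suc fact_numeral)
  then show ?thesis
    unfolding taylor2_remainder_def inner_matrix_vector_mult_eq_sum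
    by (intro bexI[of _ t]) (simp_all add: p0_def p1_def p2_def p3_def D1_def D2_def D3_def
        gradient_vec_def hessian_mat_def third_partial_def inner_vec_def mult.commute)
qed

lemma abs_third_partial_le_max_third_partial:
  fixes f :: "real^'d::finite \<Rightarrow> real"
  shows "\<bar>third_partial f i j k \<theta>\<bar> \<le> max_third_partial f \<theta>"
proof -
  have le_Max: "F x \<le> (MAX k\<in>UNIV. F k)" for F :: "'d \<Rightarrow> real" and x
    by (rule Max_ge) auto
  show ?thesis
    unfolding max_third_partial_def by (rule order_trans[OF order_trans[OF le_Max le_Max] le_Max])
qed

lemma taylor2_remainder_le:
  fixes f :: "real^'d::finite \<Rightarrow> real"
  assumes "C3 f"
  shows "\<exists>t\<in>{0<..<1}.
    \<bar>taylor2_remainder f x h\<bar> \<le> (real CARD('d) * norm h) ^ 3 / 6 * max_third_partial f (x + t *\<^sub>R h)"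
proof -
  from C3_taylor2_remainder_eq[OF assms] obtain t where t: "t \<in> {0<..<1}" and
    eq: "taylor2_remainder f x h =
      (\<Sum>k\<in>UNIV. h$k * (\<Sum>j\<in>UNIV. h$j * (\<Sum>i\<in>UNIV. h$i * third_partial f i j k (x + t *\<^sub>R h)))) / 6"
    by blast
  let ?n = "real CARD('d) * norm h"
  have "\<bar>\<Sum>k\<in>UNIV. h$k * (\<Sum>j\<in>UNIV. h$j * (\<Sum>i\<in>UNIV. h$i * third_partial f i j k (x + t *\<^sub>R h)))\<bar>
      \<le> ?n * (?n * (?n * max_third_partial f (x + t *\<^sub>R h)))"
    by (intro abs_sum_mult_nth_le abs_third_partial_le_max_third_partial)
  then show ?thesis
    using t by (intro bexI[of _ t]) (simp_all add: eq power3_eq_cube mult_ac)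
qed

lemma taylor2_remainder_le_SUP:
  fixes f :: "real^'d::finite \<Rightarrow> real"
  assumes "C3 f" "ball x \<rho> \<subseteq> U" "norm h < \<rho>"
  shows "ennreal \<bar>taylor2_remainder f x h\<bar>
    \<le> ennreal ((real CARD('d) * norm h) ^ 3 / 6) * (\<Squnion>\<theta>\<in>U. ennreal (max_third_partial f \<theta>))"
proof -
  from taylor2_remainder_le[OF assms(1)] obtain t where t: "t \<in> {0<..<1}" and
    le: "\<bar>taylor2_remainder f x h\<bar> \<le> (real CARD('d) * norm h) ^ 3 / 6 * max_third_partial f (x + t *\<^sub>R h)"
    by blast
  let ?c = "(real CARD('d) * norm h) ^ 3 / 6" and ?m = "max_third_partial f (x + t *\<^sub>R h)"
  have "norm (t *\<^sub>R h) < \<rho>"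
    using t assms(3) mult_left_le_one_le[of "norm h" t] by auto
  then have "x + t *\<^sub>R h \<in> U"
    using assms(2) by (auto simp: dist_norm)
  have "?m \<ge> 0"
    using abs_third_partial_le_max_third_partial order_trans abs_ge_zero by blast
  have "ennreal \<bar>taylor2_remainder f x h\<bar> \<le> ennreal (?c * ?m)"
    using le by (rule ennreal_leI)
  also have "\<dots> = ennreal ?c * ennreal ?m"
    by (rule ennreal_mult) (use \<open>?m \<ge> 0\<close> in auto)
  also have "\<dots> \<le> ennreal ?c * (\<Squnion>\<theta>\<in>U. ennreal (max_third_partial f \<theta>))"
    using \<open>x + t *\<^sub>R h \<in> U\<close> by (intro mult_left_mono SUP_upper) auto
  finally show ?thesis .
qed

lemma sum_taylor2_expansion:
  fixes f :: "'i \<Rightarrow> real^'d::finite \<Rightarrow> real"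
  shows "(\<Sum>i\<in>I. f i (x + s *\<^sub>R t)) - (\<Sum>i\<in>I. f i x) - (s *\<^sub>R (\<Sum>i\<in>I. gradient_vec (f i) x)) \<bullet> t
      + 1 / 2 * (t \<bullet> (K *v t))
    = (\<Sum>i\<in>I. taylor2_remainder (f i) x (s *\<^sub>R t))
      + 1 / 2 * (t \<bullet> ((s\<^sup>2 *\<^sub>R (\<Sum>i\<in>I. hessian_mat (f i) x) + K) *v t))"
  by (simp add: taylor2_remainder_def sum_subtractf sum.distrib sum_divide_distrib inner_sum_left
      inner_sum_right sum_matrix_vector_mult scaleR_matrix_vector_mult sum_distrib_left
      power2_eq_square algebra_simps)

lemma second_order_expansion_error_le:
  fixes f :: "'i \<Rightarrow> real^'d::finite \<Rightarrow> real"
  assumes "\<And>i. i \<in> I \<Longrightarrow> C3 (f i)" "ball x \<rho> \<subseteq> U" "\<bar>s\<bar> * norm t < \<rho>"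
  shows "ennreal \<bar>(\<Sum>i\<in>I. f i (x + s *\<^sub>R t)) - (\<Sum>i\<in>I. f i x)
        - (s *\<^sub>R (\<Sum>i\<in>I. gradient_vec (f i) x)) \<bullet> t + 1 / 2 * (t \<bullet> (K *v t))\<bar>
    \<le> ennreal ((real CARD('d) * \<bar>s\<bar> * norm t) ^ 3 / 6)
        * (\<Sum>i\<in>I. \<Squnion>\<theta>\<in>U. ennreal (max_third_partial (f i) \<theta>))
      + ennreal (real CARD('d) * norm (s\<^sup>2 *\<^sub>R (\<Sum>i\<in>I. hessian_mat (f i) x) + K) * (norm t)\<^sup>2 / 2)"
proof -
  let ?Q = "t \<bullet> ((s\<^sup>2 *\<^sub>R (\<Sum>i\<in>I. hessian_mat (f i) x) + K) *v t)"
  have "ennreal \<bar>(\<Sum>i\<in>I. taylor2_remainder (f i) x (s *\<^sub>R t)) + 1 / 2 * ?Q\<bar>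
      \<le> ennreal ((\<Sum>i\<in>I. \<bar>taylor2_remainder (f i) x (s *\<^sub>R t)\<bar>) + \<bar>?Q\<bar> / 2)"
    by (intro ennreal_leI order_trans[OF abs_triangle_ineq] add_mono sum_abs) simp
  also have "\<dots> = (\<Sum>i\<in>I. ennreal \<bar>taylor2_remainder (f i) x (s *\<^sub>R t)\<bar>) + ennreal (\<bar>?Q\<bar> / 2)"
    by (simp add: ennreal_plus sum_ennreal)
  also have "\<dots> \<le> ennreal ((real CARD('d) * \<bar>s\<bar> * norm t) ^ 3 / 6)
        * (\<Sum>i\<in>I. \<Squnion>\<theta>\<in>U. ennreal (max_third_partial (f i) \<theta>))
      + ennreal (real CARD('d) * norm (s\<^sup>2 *\<^sub>R (\<Sum>i\<in>I. hessian_mat (f i) x) + K) * (norm t)\<^sup>2 / 2)"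
    unfolding sum_distrib_left
    using assms taylor2_remainder_le_SUP[of "f _" x \<rho> U "s *\<^sub>R t"] abs_inner_matrix_vector_mult_le
    by (intro add_mono sum_mono ennreal_leI divide_right_mono) (auto simp: mult.assoc)
  finally show ?thesis
    by (simp only: sum_taylor2_expansion)
qed

section \<open>Measurability\<close>

lemma tendsto_difference_quotient_sequentially:
  fixes g :: "real \<Rightarrow> real"
  assumes "g differentiable (at 0)"
  shows "(\<lambda>m. (g (1 / real (Suc m)) - g 0) * real (Suc m)) \<longlonglongrightarrow> deriv g 0"
proof -
  have "((\<lambda>u. (g (0 + u) - g 0) / u) \<longlongrightarrow> deriv g 0) (at 0)"
    using assms by (simp add: DERIV_deriv_iff_real_differentiable[symmetric] DERIV_def)
  moreover have "(\<lambda>m. 1 / real (Suc m)) \<longlonglongrightarrow> 0"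
    using LIMSEQ_inverse_real_of_nat by (simp add: inverse_eq_divide)
  ultimately have "((\<lambda>u. (g (0 + u) - g 0) / u) \<circ> (\<lambda>m. 1 / real (Suc m))) \<longlonglongrightarrow> deriv g 0"
    unfolding tendsto_at_iff_sequentially by auto
  then show ?thesis
    by (simp add: o_def)
qed

lemma borel_measurable_partial_deriv:
  fixes G :: "'a \<Rightarrow> real^'d::finite \<Rightarrow> real"
  assumes "\<And>\<theta>. (\<lambda>\<omega>. G \<omega> \<theta>) \<in> borel_measurable M" "\<And>\<omega>. has_partial k (G \<omega>)"
  shows "(\<lambda>\<omega>. partial_deriv k (G \<omega>) \<theta>) \<in> borel_measurable M"
proof (rule borel_measurable_LIMSEQ_real)
  fix \<omega>
  have "(\<lambda>s. G \<omega> (\<theta> + s *\<^sub>R axis k 1)) differentiable (at 0)"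
    using assms(2) unfolding has_partial_def by blast
  from tendsto_difference_quotient_sequentially[OF this]
  show "(\<lambda>m. (G \<omega> (\<theta> + (1 / real (Suc m)) *\<^sub>R axis k 1) - G \<omega> \<theta>) * real (Suc m))
      \<longlonglongrightarrow> partial_deriv k (G \<omega>) \<theta>"
    by (simp add: partial_deriv_def)
qed (use assms(1) in measurable)

lemma continuous_on_Max:
  fixes f :: "'i \<Rightarrow> 'a::topological_space \<Rightarrow> 'b::linorder_topology"
  assumes "finite I" "I \<noteq> {}" "\<And>i. i \<in> I \<Longrightarrow> continuous_on S (f i)"
  shows "continuous_on S (\<lambda>x. MAX i\<in>I. f i x)"
  using assms
proof (induction I rule: finite_ne_induct)
  case (singleton i)
  then show ?case by simp
next
  case (insert i I)
  then show ?case
    by (simp add: continuous_on_max)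
qed

lemma continuous_on_max_third_partial:
  fixes f :: "real^'d::finite \<Rightarrow> real"
  assumes "C3 f"
  shows "continuous_on UNIV (max_third_partial f)"
proof -
  have "continuous_on UNIV (third_partial f i j k)" for i j k
    using assms unfolding C3_def third_partial_def[abs_def] by blast
  then show ?thesis
    unfolding max_third_partial_def[abs_def]
    by (intro continuous_on_Max continuous_on_rabs) auto
qed

lemma borel_measurable_max_third_partial:
  fixes F :: "'a \<Rightarrow> real^'d::finite \<Rightarrow> real"
  assumes "\<And>\<omega>. C3 (F \<omega>)" "\<And>\<theta>. (\<lambda>\<omega>. F \<omega> \<theta>) \<in> borel_measurable M"
  shows "(\<lambda>\<omega>. max_third_partial (F \<omega>) \<theta>) \<in> borel_measurable M"
proof -
  have "(\<lambda>\<omega>. third_partial (F \<omega>) i j k \<theta>) \<in> borel_measurable M" for i j k \<theta>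
    unfolding third_partial_def
    using assms unfolding C3_def
    by (intro borel_measurable_partial_deriv) auto
  then show ?thesis
    unfolding max_third_partial_def by (intro borel_measurable_Max borel_measurable_abs) auto
qed

lemma SUP_open_eq_SUP_dense:
  fixes \<Phi> :: "'b::topological_space \<Rightarrow> real"
  assumes "open U" "continuous_on U \<Phi>" and dense: "\<And>X. open X \<Longrightarrow> X \<noteq> {} \<Longrightarrow> \<exists>d\<in>D. d \<in> X"
  shows "(\<Squnion>\<theta>\<in>U. ennreal (\<Phi> \<theta>)) = (\<Squnion>\<theta>\<in>U \<inter> D. ennreal (\<Phi> \<theta>))"
proof (rule antisym)
  let ?R = "\<Squnion>\<theta>\<in>U \<inter> D. ennreal (\<Phi> \<theta>)"
  show "(\<Squnion>\<theta>\<in>U. ennreal (\<Phi> \<theta>)) \<le> ?R"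
  proof (rule SUP_least, rule ccontr)
    fix \<theta> assume "\<theta> \<in> U" and "\<not> ennreal (\<Phi> \<theta>) \<le> ?R"
    then have "?R < ennreal (\<Phi> \<theta>)"
      by (simp only: not_le)
    moreover have "?R < \<top>"
      by (rule less_trans[OF \<open>?R < ennreal (\<Phi> \<theta>)\<close> ennreal_less_top])
    ultimately obtain r where "r \<ge> 0" "?R = ennreal r" "r < \<Phi> \<theta>"
      unfolding less_top_ennreal by (auto simp: ennreal_less_iff)
    define V where "V = \<Phi> -` {r<..} \<inter> U"
    have "open V"
      unfolding V_def
      using continuous_on_open_vimage[OF assms(1), THEN iffD1, OF assms(2), rule_format, of "{r<..}"]
      by simp
    moreover have "\<theta> \<in> V"
      using \<open>\<theta> \<in> U\<close> \<open>r < \<Phi> \<theta>\<close> by (simp add: V_def)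
    ultimately obtain d where "d \<in> D" "d \<in> V"
      using dense by blast
    then have "ennreal r < ennreal (\<Phi> d)"
      using \<open>r \<ge> 0\<close> by (simp add: V_def ennreal_less_iff)
    also have "\<dots> \<le> ?R"
      using \<open>d \<in> D\<close> \<open>d \<in> V\<close> by (intro SUP_upper) (simp add: V_def)
    finally show False
      using \<open>?R = ennreal r\<close> by simp
  qed
qed (rule SUP_subset_mono; simp)

lemma borel_measurable_SUP_continuous:
  fixes \<Phi> :: "'a \<Rightarrow> 'b::{topological_space, second_countable_topology} \<Rightarrow> real"
  assumes "open U" "\<And>\<omega>. continuous_on U (\<Phi> \<omega>)" "\<And>\<theta>. (\<lambda>\<omega>. \<Phi> \<omega> \<theta>) \<in> borel_measurable M"
  shows "(\<lambda>\<omega>. \<Squnion>\<theta>\<in>U. ennreal (\<Phi> \<omega> \<theta>)) \<in> borel_measurable M"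
proof -
  obtain D :: "'b set" where D: "countable D" "\<And>X. open X \<Longrightarrow> X \<noteq> {} \<Longrightarrow> \<exists>d\<in>D. d \<in> X"
    using countable_dense_exists by blast
  have "(\<lambda>\<omega>. \<Squnion>\<theta>\<in>U. ennreal (\<Phi> \<omega> \<theta>)) = (\<lambda>\<omega>. \<Squnion>\<theta>\<in>U \<inter> D. ennreal (\<Phi> \<omega> \<theta>))"
    using SUP_open_eq_SUP_dense[OF assms(1,2) D(2)] by blast
  also have "\<dots> \<in> borel_measurable M"
    using D(1) assms(3) by (intro borel_measurable_SUP) auto
  finally show ?thesis .
qed

section \<open>Outer probability and Markov's inequality\<close>

lemma outer_prob_nonneg: "0 \<le> outer_prob M A"
  unfolding outer_prob_def by (rule cInf_greatest) auto

lemma outer_prob_le_add_measure: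
  assumes "finite_measure M" "A \<inter> space M \<subseteq> A1 \<union> A2" "A2 \<in> sets M"
  shows "outer_prob M A \<le> outer_prob M A1 + measure M A2"
proof -
  interpret finite_measure M by (rule assms(1))
  have "outer_prob M A - measure M A2 \<le> outer_prob M A1"
    unfolding outer_prob_def[of M A1]
  proof (rule cInf_greatest)
    show "{measure M B |B. B \<in> sets M \<and> A1 \<inter> space M \<subseteq> B} \<noteq> {}" by auto
  next
    fix x assume "x \<in> {measure M B |B. B \<in> sets M \<and> A1 \<inter> space M \<subseteq> B}"
    then obtain B where B: "B \<in> sets M" "A1 \<inter> space M \<subseteq> B" and x: "x = measure M B" by auto
    have "outer_prob M A \<le> measure M (B \<union> A2)"
      unfolding outer_prob_def
    proof (rule cInf_lower)
      show "measure M (B \<union> A2) \<in> {measure M B' |B'. B' \<in> sets M \<and> A \<inter> space M \<subseteq> B'}"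
        using B assms(2,3) by blast
    qed (auto intro: bdd_belowI[of _ 0])
    also have "\<dots> \<le> measure M B + measure M A2"
      using B assms(3) by (intro measure_subadditive) (auto simp: emeasure_eq_measure)
    finally show "outer_prob M A - measure M A2 \<le> x" using x by simp
  qed
  then show ?thesis by simp
qed

lemma tendsto_outer_prob_zero_cover:
  assumes "finite_measure M"
    and cover: "\<forall>\<^sub>F n in sequentially. E n \<inter> space M \<subseteq> E1 n \<union> E2 n"
    and "\<And>n. E2 n \<in> sets M"
    and "(\<lambda>n. outer_prob M (E1 n)) \<longlonglongrightarrow> 0" "(\<lambda>n. measure M (E2 n)) \<longlonglongrightarrow> 0"
  shows "(\<lambda>n. outer_prob M (E n)) \<longlonglongrightarrow> 0"
proof (rule tendsto_sandwich)
  show "\<forall>\<^sub>F n in sequentially. 0 \<le> outer_prob M (E n)"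
    by (simp add: outer_prob_nonneg)
  show "\<forall>\<^sub>F n in sequentially. outer_prob M (E n) \<le> outer_prob M (E1 n) + measure M (E2 n)"
    using cover by eventually_elim (rule outer_prob_le_add_measure[OF assms(1) _ assms(3)])
  show "(\<lambda>n. outer_prob M (E1 n) + measure M (E2 n)) \<longlonglongrightarrow> 0"
    using tendsto_add[OF assms(4,5)] by simp
qed simp

lemma measure_one_le_mult_sum_le:
  fixes S :: "'i \<Rightarrow> 'a \<Rightarrow> ennreal"
  assumes "\<And>i. i \<in> I \<Longrightarrow> S i \<in> borel_measurable M"
    and "\<And>i. i \<in> I \<Longrightarrow> (\<integral>\<^sup>+\<omega>. S i \<omega> \<partial>M) \<le> ennreal C" and "c \<ge> 0"
  shows "measure M {\<omega>\<in>space M. 1 \<le> ennreal c * (\<Sum>i\<in>I. S i \<omega>)} \<le> c * (real (card I) * max C 0)"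
proof -
  have "emeasure M {\<omega>\<in>space M. 1 \<le> ennreal c * (\<Sum>i\<in>I. S i \<omega>)}
      \<le> ennreal c * (\<integral>\<^sup>+\<omega>. (\<Sum>i\<in>I. S i \<omega>) * indicator (space M) \<omega> \<partial>M)"
    using assms(1) by (intro nn_integral_Markov_inequality) auto
  also have "(\<integral>\<^sup>+\<omega>. (\<Sum>i\<in>I. S i \<omega>) * indicator (space M) \<omega> \<partial>M) = (\<Sum>i\<in>I. \<integral>\<^sup>+\<omega>. S i \<omega> \<partial>M)"
    using assms(1) by (simp add: nn_integral_sum nn_integral_cong[of M _ "\<lambda>\<omega>. \<Sum>i\<in>I. S i \<omega>"])
  also have "\<dots> \<le> (\<Sum>i\<in>I. ennreal (max C 0))"
    using assms(2) by (intro sum_mono) (simp add: ennreal_max_0)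
  also have "ennreal c * \<dots> = ennreal (c * (real (card I) * max C 0))"
    using assms(3) by (simp add: ennreal_mult ennreal_of_nat_eq_real_of_nat)
  finally show ?thesis
    unfolding measure_def using assms(3) by (intro enn2real_leI) (auto simp: mult_left_mono)
qed

lemma tendsto_measure_one_le_mult_sum:
  fixes S :: "nat \<Rightarrow> 'a \<Rightarrow> ennreal"
  assumes "\<And>i. S i \<in> borel_measurable M" "\<And>i. (\<integral>\<^sup>+\<omega>. S i \<omega> \<partial>M) \<le> ennreal C"
    and "\<And>n. c n \<ge> 0" "(\<lambda>n. c n * real n) \<longlonglongrightarrow> 0"
  shows "(\<lambda>n. measure M {\<omega>\<in>space M. 1 \<le> ennreal (c n) * (\<Sum>i=1..n. S i \<omega>)}) \<longlonglongrightarrow> 0"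
proof (rule tendsto_sandwich[of "\<lambda>n. 0"])
  show "\<forall>\<^sub>F n in sequentially.
      measure M {\<omega>\<in>space M. 1 \<le> ennreal (c n) * (\<Sum>i=1..n. S i \<omega>)} \<le> c n * real n * max C 0"
    using measure_one_le_mult_sum_le[of "{1.._}" S M C] assms(1-3) by (simp add: mult.assoc)
  show "(\<lambda>n. c n * real n * max C 0) \<longlonglongrightarrow> 0"
    using tendsto_mult[OF assms(4) tendsto_const[of "max C 0"]] by simp
qed auto

section \<open>Uniform convergence of the second-order expansion\<close>

text \<open>The factor 2/\<epsilon> in the cubic hypothesis normalises it to the threshold 1 of Markov's
  inequality as used in the next proof; each hypothesis bounds its error term by \<epsilon>/2.\<close>
lemma abs_second_order_expansion_le:
  fixes f :: "nat \<Rightarrow> real^'d::finite \<Rightarrow> real"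
  assumes "\<And>i. C3 (f i)" "ball x \<rho> \<subseteq> U" "norm t \<le> b" "b / sqrt (real n) < \<rho>" "\<epsilon> > 0"
    and quadratic: "real CARD('d) * b\<^sup>2 * norm ((1 / real n) *\<^sub>R (\<Sum>i=1..n. hessian_mat (f i) x) + K) \<le> \<epsilon>"
    and cubic: "ennreal (2 / \<epsilon> * ((real CARD('d) * b / sqrt (real n)) ^ 3 / 6))
      * (\<Sum>i=1..n. \<Squnion>\<theta>\<in>U. ennreal (max_third_partial (f i) \<theta>)) \<le> 1"
  shows "\<bar>(\<Sum>i=1..n. f i (x + (1 / sqrt (real n)) *\<^sub>R t)) - (\<Sum>i=1..n. f i x)
    - ((1 / sqrt (real n)) *\<^sub>R (\<Sum>i=1..n. gradient_vec (f i) x)) \<bullet> t + 1 / 2 * (t \<bullet> (K *v t))\<bar> \<le> \<epsilon>"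
proof -
  let ?d = "real CARD('d)" and ?s = "1 / sqrt (real n)"
    and ?H = "(1 / real n) *\<^sub>R (\<Sum>i=1..n. hessian_mat (f i) x)"
    and ?X = "\<Sum>i=1..n. \<Squnion>\<theta>\<in>U. ennreal (max_third_partial (f i) \<theta>)"
    and ?c = "2 / \<epsilon> * ((real CARD('d) * b / sqrt (real n)) ^ 3 / 6)"
  have "\<bar>?s\<bar> * norm t < \<rho>"
    using le_less_trans[OF divide_right_mono[OF \<open>norm t \<le> b\<close>] \<open>b / sqrt (real n) < \<rho>\<close>] by simp
  then have "ennreal \<bar>(\<Sum>i=1..n. f i (x + ?s *\<^sub>R t)) - (\<Sum>i=1..n. f i x)
      - (?s *\<^sub>R (\<Sum>i=1..n. gradient_vec (f i) x)) \<bullet> t + 1 / 2 * (t \<bullet> (K *v t))\<bar>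
    \<le> ennreal ((?d * \<bar>?s\<bar> * norm t) ^ 3 / 6) * ?X + ennreal (?d * norm (?H + K) * (norm t)\<^sup>2 / 2)"
    using second_order_expansion_error_le[of "{1..n}" f x \<rho> U ?s t K] assms(1,2)
    by (simp add: power_divide)
  also have "\<dots> \<le> ennreal (\<epsilon> / 2) * (ennreal ?c * ?X) + ennreal (\<epsilon> / 2)"
  proof (intro add_mono ennreal_leI)
    have "(?d * \<bar>?s\<bar> * norm t) ^ 3 / 6 \<le> (?d * \<bar>?s\<bar> * b) ^ 3 / 6"
      by (intro divide_right_mono power_mono mult_left_mono) (use \<open>norm t \<le> b\<close> in auto)
    also have "\<dots> = \<epsilon> / 2 * ?c"
      using \<open>\<epsilon> > 0\<close> by (simp add: power_divide)
    finally have "(?d * \<bar>?s\<bar> * norm t) ^ 3 / 6 \<le> \<epsilon> / 2 * ?c" .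
    then have "ennreal ((?d * \<bar>?s\<bar> * norm t) ^ 3 / 6) \<le> ennreal (\<epsilon> / 2) * ennreal ?c"
      using \<open>\<epsilon> > 0\<close> by (simp add: ennreal_mult'[symmetric] ennreal_leI)
    then show "ennreal ((?d * \<bar>?s\<bar> * norm t) ^ 3 / 6) * ?X \<le> ennreal (\<epsilon> / 2) * (ennreal ?c * ?X)"
      unfolding mult.assoc[symmetric] by (rule mult_right_mono) simp
    have "(norm t)\<^sup>2 \<le> b\<^sup>2"
      using \<open>norm t \<le> b\<close> by (intro power_mono) auto
    then have "?d * norm (?H + K) * (norm t)\<^sup>2 \<le> ?d * b\<^sup>2 * norm (?H + K)"
      by (simp add: mult_left_mono mult_right_mono mult_ac)
    then have "?d * norm (?H + K) * (norm t)\<^sup>2 \<le> \<epsilon>"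
      using quadratic by (rule order_trans)
    then show "?d * norm (?H + K) * (norm t)\<^sup>2 / 2 \<le> \<epsilon> / 2"
      by simp
  qed
  also have "\<dots> \<le> ennreal (\<epsilon> / 2) * 1 + ennreal (\<epsilon> / 2)"
    using cubic by (intro add_mono mult_left_mono) auto
  also have "\<dots> = ennreal \<epsilon>"
    using \<open>\<epsilon> > 0\<close> by (simp add: ennreal_plus[symmetric])
  finally show ?thesis
    using \<open>\<epsilon> > 0\<close> by (simp add: ennreal_le_iff)
qed

lemma unif_conv_in_prob_zero_second_order_expansion:
  fixes F :: "nat \<Rightarrow> 'a \<Rightarrow> real^'d::finite \<Rightarrow> real" and K :: "real^'d^'d"
  assumes M: "finite_measure M"
    and smooth: "\<And>i \<omega>. C3 (F i \<omega>)"
    and meas: "\<And>i \<theta>. (\<lambda>\<omega>. F i \<omega> \<theta>) \<in> borel_measurable M"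
    and hess: "conv_in_prob M (\<lambda>n \<omega>. (1 / real n) *\<^sub>R (\<Sum>i=1..n. hessian_mat (F i \<omega>) x)) (- K)"
    and U: "open U" "x \<in> U"
    and third: "\<And>i. (\<integral>\<^sup>+\<omega>. (\<Squnion>\<theta>\<in>U. ennreal (max_third_partial (F i \<omega>) \<theta>)) \<partial>M) \<le> ennreal C"
    and "bounded B"
  shows "unif_conv_in_prob_zero M
    (\<lambda>n t \<omega>. (\<Sum>i=1..n. F i \<omega> (x + (1 / sqrt (real n)) *\<^sub>R t)) - (\<Sum>i=1..n. F i \<omega> x)
       - ((1 / sqrt (real n)) *\<^sub>R (\<Sum>i=1..n. gradient_vec (F i \<omega>) x)) \<bullet> t + 1 / 2 * (t \<bullet> (K *v t))) B"
    (is "unif_conv_in_prob_zero M ?R B")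
proof (unfold unif_conv_in_prob_zero_def, intro allI impI)
  fix \<epsilon> :: real assume "\<epsilon> > 0"
  define S where "S i \<omega> = (\<Squnion>\<theta>\<in>U. ennreal (max_third_partial (F i \<omega>) \<theta>))" for i \<omega>
  obtain b where "b > 0" and b: "\<And>t. t \<in> B \<Longrightarrow> norm t \<le> b"
    using bounded_pos \<open>bounded B\<close> by blast
  obtain \<rho> where "\<rho> > 0" "ball x \<rho> \<subseteq> U"
    using U openE by blast
  define \<delta> where "\<delta> = \<epsilon> / (real CARD('d) * b\<^sup>2)"
  define c where "c n = 2 / \<epsilon> * ((real CARD('d) * b / sqrt (real n)) ^ 3 / 6)" for n
  define E1 where "E1 n = {\<omega>\<in>space M. \<delta> < dist ((1 / real n) *\<^sub>R (\<Sum>i=1..n. hessian_mat (F i \<omega>) x)) (- K)}"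
    for n
  define E2 where "E2 n = {\<omega>\<in>space M. 1 \<le> ennreal (c n) * (\<Sum>i=1..n. S i \<omega>)}" for n
  have S_meas: "S i \<in> borel_measurable M" for i
    unfolding S_def using U(1)
    by (intro borel_measurable_SUP_continuous continuous_on_subset[OF continuous_on_max_third_partial]
        borel_measurable_max_third_partial smooth meas) auto
  have cover: "{\<omega>\<in>space M. \<exists>t\<in>B. \<epsilon> < \<bar>?R n t \<omega>\<bar>} \<inter> space M \<subseteq> E1 n \<union> E2 n"
    if "b / sqrt (real n) < \<rho>" for n
  proof (rule subsetI, rule ccontr)
    fix \<omega> assume "\<omega> \<in> {\<omega>\<in>space M. \<exists>t\<in>B. \<epsilon> < \<bar>?R n t \<omega>\<bar>} \<inter> space M" "\<omega> \<notin> E1 n \<union> E2 n"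
    then obtain t where "t \<in> B" "\<epsilon> < \<bar>?R n t \<omega>\<bar>"
      and "norm ((1 / real n) *\<^sub>R (\<Sum>i=1..n. hessian_mat (F i \<omega>) x) + K) \<le> \<delta>"
      and "ennreal (c n) * (\<Sum>i=1..n. S i \<omega>) \<le> 1"
      by (auto simp: E1_def E2_def dist_norm)
    moreover have "\<bar>?R n t \<omega>\<bar> \<le> \<epsilon>"
      using calculation \<open>\<epsilon> > 0\<close> \<open>b > 0\<close> b[of t] smooth \<open>ball x \<rho> \<subseteq> U\<close> that
      by (intro abs_second_order_expansion_le) (auto simp: S_def c_def \<delta>_def field_simps)
    ultimately show False
      by simp
  qed
  have "(\<lambda>n. b * (1 / sqrt (real n))) \<longlonglongrightarrow> 0"
    by (intro tendsto_mult_right_zero) real_asymp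
  then have "\<forall>\<^sub>F n in sequentially. b / sqrt (real n) < \<rho>"
    using order_tendstoD(2)[OF _ \<open>\<rho> > 0\<close>] by simp
  then have covers:
    "\<forall>\<^sub>F n in sequentially. {\<omega>\<in>space M. \<exists>t\<in>B. \<epsilon> < \<bar>?R n t \<omega>\<bar>} \<inter> space M \<subseteq> E1 n \<union> E2 n"
    by (rule eventually_mono) (rule cover)
  have "(\<lambda>n. outer_prob M (E1 n)) \<longlonglongrightarrow> 0"
    using hess \<open>\<epsilon> > 0\<close> \<open>b > 0\<close> unfolding conv_in_prob_def E1_def \<delta>_def by simp
  moreover have "(\<lambda>n. measure M (E2 n)) \<longlonglongrightarrow> 0"
  proof -
    have "(\<lambda>n. real n * (1 / sqrt (real n)) ^ 3) \<longlonglongrightarrow> 0"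
      by real_asymp
    from tendsto_mult_right_zero[OF this, of "2 / \<epsilon> * ((real CARD('d) * b) ^ 3 / 6)"]
    have "(\<lambda>n. c n * real n) \<longlonglongrightarrow> 0"
      by (simp add: c_def power_mult_distrib power_divide mult_ac)
    then show ?thesis
      unfolding E2_def using S_meas third[folded S_def] \<open>\<epsilon> > 0\<close> \<open>b > 0\<close>
      by (intro tendsto_measure_one_le_mult_sum) (auto simp: c_def)
  qed
  moreover have "E2 n \<in> sets M" for n
    unfolding E2_def using S_meas by measurable
  ultimately show "(\<lambda>n. outer_prob M {\<omega>\<in>space M. \<exists>t\<in>B. \<epsilon> < \<bar>?R n t \<omega>\<bar>}) \<longlonglongrightarrow> 0"
    using tendsto_outer_prob_zero_cover[OF M covers] by blast
qed

theorem proposition1: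
  fixes M :: "'a measure" and N :: "'y measure" and Y :: "nat \<Rightarrow> 'a \<Rightarrow> 'y"
    and Q :: "'s measure" and lS :: "nat \<Rightarrow> real^'d::finite \<Rightarrow> 'y \<Rightarrow> 's \<Rightarrow> real"
    and mu :: "nat \<Rightarrow> real^'d \<Rightarrow> 'y \<Rightarrow> real"
    and \<Theta> :: "(real^'d) set" and \<theta>star :: "real^'d"
    and K1 K2 :: "real^'d^'d" and B0 :: "(real^'d) set" and C :: real
  assumes M: "prob_space M"
    and Ymeas: "\<And>i. Y i \<in> measurable M N"
    and Q: "prob_space Q"
    and mu_def: "\<And>i \<theta> y. mu i \<theta> y = (\<integral>s. lS i \<theta> y s \<partial>Q)"
    and mu_meas: "\<And>i \<theta>. (\<lambda>y. mu i \<theta> y) \<in> borel_measurable N"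
    and proxy: "\<theta>star \<in> \<Theta>"
      "\<And>n \<theta>. n \<ge> 1 \<Longrightarrow> \<theta> \<in> \<Theta> \<Longrightarrow>
         (\<integral>\<omega>. (\<Sum>i=1..n. mu i \<theta> (Y i \<omega>)) \<partial>M) \<le> (\<integral>\<omega>. (\<Sum>i=1..n. mu i \<theta>star (Y i \<omega>)) \<partial>M)"
    and smooth: "\<And>i y. C3 (\<lambda>\<theta>. mu i \<theta> y)"
    and K1: "pos_def_mat K1"
    and score: "conv_in_distr M
                  (\<lambda>n \<omega>. (1 / sqrt (real n)) *\<^sub>R (\<Sum>i=1..n. gradient_vec (\<lambda>\<theta>. mu i \<theta> (Y i \<omega>)) \<theta>star))
                  (mvnormal K1)"
    and K2: "pos_def_mat K2"
    and hess: "conv_in_prob M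
                  (\<lambda>n \<omega>. (1 / real n) *\<^sub>R (\<Sum>i=1..n. hessian_mat (\<lambda>\<theta>. mu i \<theta> (Y i \<omega>)) \<theta>star))
                  (- K2)"
    and B0: "\<exists>c r. B0 = ball c r" "\<theta>star \<in> B0"
    and third: "\<And>i. (\<integral>\<^sup>+\<omega>. (\<Squnion>\<theta>\<in>B0. ennreal (MAX k1\<in>UNIV. MAX k2\<in>UNIV. MAX k3\<in>UNIV.
                         \<bar>third_partial (\<lambda>\<theta>. mu i \<theta> (Y i \<omega>)) k1 k2 k3 \<theta>\<bar>)) \<partial>M) \<le> ennreal C"
  shows "conv_in_distr M
           (\<lambda>n \<omega>. (1 / sqrt (real n)) *\<^sub>R (\<Sum>i=1..n. gradient_vec (\<lambda>\<theta>. mu i \<theta> (Y i \<omega>)) \<theta>star))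
           (mvnormal K1)
       \<and> (\<forall>B :: (real^'d) set. bounded B \<and> 0 \<in> B \<longrightarrow>
           unif_conv_in_prob_zero M
             (\<lambda>n t \<omega>.
                (\<Sum>i=1..n. mu i (\<theta>star + (1 / sqrt (real n)) *\<^sub>R t) (Y i \<omega>))
                - (\<Sum>i=1..n. mu i \<theta>star (Y i \<omega>))
                - ((1 / sqrt (real n)) *\<^sub>R (\<Sum>i=1..n. gradient_vec (\<lambda>\<theta>. mu i \<theta> (Y i \<omega>)) \<theta>star)) \<bullet> t
                + (1 / 2) * (t \<bullet> (K2 *v t)))
             B)"
proof -
  have "open B0"
    using B0(1) by auto
  have "unif_conv_in_prob_zero M
      (\<lambda>n t \<omega>. (\<Sum>i=1..n. mu i (\<theta>star + (1 / sqrt (real n)) *\<^sub>R t) (Y i \<omega>))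
         - (\<Sum>i=1..n. mu i \<theta>star (Y i \<omega>))
         - ((1 / sqrt (real n)) *\<^sub>R (\<Sum>i=1..n. gradient_vec (\<lambda>\<theta>. mu i \<theta> (Y i \<omega>)) \<theta>star)) \<bullet> t
         + (1 / 2) * (t \<bullet> (K2 *v t))) B" if "bounded B" for B
    using unif_conv_in_prob_zero_second_order_expansion[of M "\<lambda>i \<omega> \<theta>. mu i \<theta> (Y i \<omega>)"]
      prob_space.axioms(1)[OF M] smooth measurable_compose[OF Ymeas mu_meas] hess
      \<open>open B0\<close> B0(2) third[unfolded max_third_partial_def[symmetric]] that
    by blast
  with score show ?thesis
    by blast
qed

end
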